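(* Let $k$ be a positive integer and $n_0,\ldots,n_{k-1}$ positive integers, with indices read modulo $k$. For each $j\in\{0,\ldots,k-1\}$ let $A^{(j)}$ be a real $n_j\times n_{j+1}$ matrix, and suppose the signed digraph $G_{A^{(0)}A^{(1)}\cdots A^{(k-1)}}$ is e-cycle-free. Then every matrix in $\mathcal{Q}(A^{(0)})\mathcal{Q}(A^{(1)})\cdots\mathcal{Q}(A^{(k-1)})$ is a $P_0$-matrix.
   Context: Indices $j$ are taken modulo $k$. For a real matrix $M$, $\mathcal{Q}(M)$ is the set of real matrices $X$ of the same dimensions with $M_{ij}>0\Rightarrow X_{ij}>0$, $M_{ij}<0\Rightarrow X_{ij}<0$, $M_{ij}=0\Rightarrow X_{ij}=0$, and $\mathcal{Q}(A^{(0)})\cdots\mathcal{Q}(A^{(k-1)})=\{B^{(0)}\cdots B^{(k-1)} : B^{(j)}\in\mathcal{Q}(A^{(j)})\}$. The signed digraph $G=G_{A^{(0)}\cdots A^{(k-1)}}$ has vertex set the disjoint union of $V_0,\ldots,V_{k-1}$ with $V_j=\{V_j^1,\ldots,V_j^{n_j}\}$; there is a directed edge from $V_j^r$ to $V_{j+1}^s$ iff $(A^{(j)})_{rs}\neq 0$, with the sign of $(A^{(j)})_{rs}$; no other edges (loops allowed when $k=1$). Every directed cycle has length a multiple of $k$; a directed cycle with $kr_1$ edges, $r_2$ of them negative, is an e-cycle if $(-1)^{r_1+r_2}=1$ and an o-cycle otherwise; $G$ is e-cycle-free if it has no e-cycle. A $P_0$-matrix is a real square matrix all of whose principal minors are nonnegative.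 *)

theory Defs
  imports "Jordan_Normal_Form.Determinant" "Jordan_Normal_Form.DL_Submatrix"
begin

text \<open>A cyclic family of matrices: k, dimensions n j (j < k), matrices A j (j < k),
  where A j is an (n j) x (n ((j+1) mod k)) real matrix.\<close>

definition sign_pattern_class :: "real mat \<Rightarrow> real mat set" ("\<Q>") where
  "\<Q> M = {X. dim_row X = dim_row M \<and> dim_col X = dim_col M \<and>
     (\<forall>i < dim_row M. \<forall>j < dim_col M.
        (M $$ (i,j) > 0 \<longrightarrow> X $$ (i,j) > 0) \<and>
        (M $$ (i,j) < 0 \<longrightarrow> X $$ (i,j) < 0) \<and>
        (M $$ (i,j) = 0 \<longrightarrow> X $$ (i,j) = 0))}"

fun chain_prod :: "nat \<Rightarrow> (nat \<Rightarrow> real mat) \<Rightarrow> nat \<Rightarrow> real mat" where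
  "chain_prod d B 0 = 1\<^sub>m d"
| "chain_prod d B (Suc m) = chain_prod d B m * B m"

definition cyclic_product :: "nat \<Rightarrow> (nat \<Rightarrow> real mat) \<Rightarrow> real mat" where
  "cyclic_product k B = chain_prod (dim_row (B 0)) B k"

definition sign_class_product :: "nat \<Rightarrow> (nat \<Rightarrow> real mat) \<Rightarrow> real mat set" where
  "sign_class_product k A = {cyclic_product k B | B. \<forall>j < k. B j \<in> \<Q> (A j)}"

text \<open>Signed digraph G_{A0...A(k-1)}: vertices (j, r) standing for V_j^r
  (0-based: j < k, r < n j). Edge from (j,r) to ((j+1) mod k, s) iff (A j)_{rs} \<noteq> 0,
  with the sign of (A j)_{rs}.\<close>
definition is_vertex :: "nat \<Rightarrow> (nat \<Rightarrow> real mat) \<Rightarrow> nat \<times> nat \<Rightarrow> bool" where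
  "is_vertex k A v \<longleftrightarrow> fst v < k \<and> snd v < dim_row (A (fst v))"

definition edge_weight :: "(nat \<Rightarrow> real mat) \<Rightarrow> nat \<times> nat \<Rightarrow> nat \<times> nat \<Rightarrow> real" where
  "edge_weight A v w = A (fst v) $$ (snd v, snd w)"

definition is_edge :: "nat \<Rightarrow> (nat \<Rightarrow> real mat) \<Rightarrow> nat \<times> nat \<Rightarrow> nat \<times> nat \<Rightarrow> bool" where
  "is_edge k A v w \<longleftrightarrow> is_vertex k A v \<and> is_vertex k A w \<and>
     fst w = Suc (fst v) mod k \<and> edge_weight A v w \<noteq> 0"

definition is_dcycle :: "nat \<Rightarrow> (nat \<Rightarrow> real mat) \<Rightarrow> (nat \<times> nat) list \<Rightarrow> bool" where
  "is_dcycle k A cs \<longleftrightarrow> cs \<noteq> [] \<and> distinct cs \<and>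
     (\<forall>i < length cs. is_edge k A (cs ! i) (cs ! (Suc i mod length cs)))"

definition neg_edges :: "(nat \<Rightarrow> real mat) \<Rightarrow> (nat \<times> nat) list \<Rightarrow> nat" where
  "neg_edges A cs = card {i. i < length cs \<and> edge_weight A (cs ! i) (cs ! (Suc i mod length cs)) < 0}"

text \<open>e-cycle: cycle with k*r1 edges, r2 negative, and (-1)^(r1+r2) = 1.\<close>
definition is_e_cycle :: "nat \<Rightarrow> (nat \<Rightarrow> real mat) \<Rightarrow> (nat \<times> nat) list \<Rightarrow> bool" where
  "is_e_cycle k A cs \<longleftrightarrow> is_dcycle k A cs \<and>
     (-1::int) ^ (length cs div k + neg_edges A cs) = 1"

definition e_cycle_free :: "nat \<Rightarrow> (nat \<Rightarrow> real mat) \<Rightarrow> bool" where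
  "e_cycle_free k A \<longleftrightarrow> (\<nexists>cs. is_e_cycle k A cs)"

definition P0_matrix :: "real mat \<Rightarrow> bool" where
  "P0_matrix M \<longleftrightarrow> M \<in> carrier_mat (dim_row M) (dim_row M) \<and>
     (\<forall>S \<subseteq> {..<dim_row M}. det (submatrix M S S) \<ge> 0)"

end

theory Submission
  imports Defs
begin

text \<open>Expanding a principal minor of \<open>B 0 * \<dots> * B (k - 1)\<close> one factor at a time writes it as
  a sum of terms \<open>sign p \<cdot> \<Prod>\<close>(entries along a family of paths through the \<open>k\<close> layers of \<open>G\<close>),
  where the paths are disjoint in every layer and the permutation \<open>p\<close> matches their ends with their
  starts. A cycle of \<open>p\<close> of length \<open>c\<close> glues its paths into a directed cycle of \<open>G\<close> with \<open>k c\<close> edges;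
  since that cycle is not an e-cycle, the product of the signs of its entries is \<open>-(-1)\<^sup>c\<close>.
  Multiplying over the cycles of \<open>p\<close>, the sign of the whole product of entries is \<open>sign p\<close>,
  so each term equals \<open>(sign p)\<^sup>2\<close> times a nonnegative number.\<close>

inductive sums_of :: "('a::comm_monoid_add \<Rightarrow> bool) \<Rightarrow> 'a \<Rightarrow> bool" for P where
  zero: "sums_of P 0"
| single: "P x \<Longrightarrow> sums_of P x"
| add: "sums_of P x \<Longrightarrow> sums_of P y \<Longrightarrow> sums_of P (x + y)"

lemma sums_of_sum: "(\<And>i. i \<in> I \<Longrightarrow> sums_of P (f i)) \<Longrightarrow> sums_of P (sum f I)"
  by (induct I rule: infinite_finite_induct) (auto intro: sums_of.intros)

lemma sums_of_mult_right:
  fixes c :: "'a::semiring_0"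
  assumes "sums_of P x" and "\<And>y. P y \<Longrightarrow> Q (y * c)"
  shows "sums_of Q (x * c)"
  using assms by induct (auto simp: distrib_right intro: sums_of.intros)

lemma sums_of_nonneg:
  fixes x :: "'a::ordered_comm_monoid_add"
  assumes "sums_of P x" and "\<And>y. P y \<Longrightarrow> 0 \<le> y"
  shows "0 \<le> x"
  using assms by induct (auto intro: add_nonneg_nonneg)

definition perm_cycle :: "('a \<Rightarrow> 'a) \<Rightarrow> 'a list \<Rightarrow> bool" where
  "perm_cycle p cs \<longleftrightarrow> cs \<noteq> [] \<and> distinct cs \<and>
     (\<forall>i < length cs. p (cs ! i) = cs ! (Suc i mod length cs))"

lemma perm_cycle_cong: "(\<And>x. x \<in> set cs \<Longrightarrow> p x = q x) \<Longrightarrow> perm_cycle p cs = perm_cycle q cs"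
  unfolding perm_cycle_def by (auto simp: nth_mem)

lemma perm_cycle_closed: "perm_cycle p cs \<Longrightarrow> x \<in> set cs \<Longrightarrow> p x \<in> set cs"
  unfolding perm_cycle_def by (metis in_set_conv_nth mod_less_divisor length_greater_0_conv)

lemma perm_cycle_rotate:
  assumes "perm_cycle p cs"
  shows "perm_cycle p (rotate r cs)"
proof -
  have "p (rotate r cs ! i) = rotate r cs ! (Suc i mod length cs)" if "i < length cs" for i
    using assms that unfolding perm_cycle_def
    by (simp add: nth_rotate mod_Suc_eq add.commute[of r] mod_add_left_eq)
  then show ?thesis using assms unfolding perm_cycle_def by simp
qed

lemma perm_cycle_snoc:
  assumes cyc: "perm_cycle q cs" and b: "last cs = b" and a: "a \<notin> set cs"
    and "p b = a" and "p a = q b" and agree: "\<And>x. x \<in> set cs \<Longrightarrow> x \<noteq> b \<Longrightarrow> p x = q x"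
  shows "perm_cycle p (cs @ [a])"
proof -
  let ?L = "length cs"
  have L: "?L > 0" and dist: "distinct cs"
    and step: "\<And>i. i < ?L \<Longrightarrow> q (cs ! i) = cs ! (Suc i mod ?L)"
    using cyc unfolding perm_cycle_def by auto
  have b_nth: "cs ! (?L - 1) = b" using b L by (simp add: last_conv_nth)
  have "p ((cs @ [a]) ! i) = (cs @ [a]) ! (Suc i mod Suc ?L)" if i: "i < Suc ?L" for i
  proof -
    consider "Suc i < ?L" | "Suc i = ?L" | "i = ?L" using i by linarith
    then show ?thesis
    proof cases
      case 1
      have "cs ! i \<noteq> b" using dist b_nth 1 nth_eq_iff_index_eq[of cs i "?L - 1"] by auto
      then show ?thesis using 1 agree[of "cs ! i"] step[of i] by (simp add: nth_append)
    next
      case 2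
      then have "i = ?L - 1" by simp
      then show ?thesis using 2 b_nth \<open>p b = a\<close> by (simp add: nth_append)
    next
      case 3
      then show ?thesis using step[of "?L - 1"] b_nth L \<open>p a = q b\<close> by (simp add: nth_append)
    qed
  qed
  then show ?thesis using dist a unfolding perm_cycle_def by simp
qed

lemma perm_cycle_transpose_cases:
  assumes cyc: "perm_cycle (p \<circ> transpose a b) cs" and "p b = a" and a: "a \<notin> set cs"
  obtains "b \<notin> set cs" "perm_cycle p cs"
  | cs' where "b \<in> set cs" "perm_cycle p cs'" "set cs' = insert a (set cs)" "length cs' = Suc (length cs)"
proof (cases "b \<in> set cs")
  case False
  then have "perm_cycle p cs = perm_cycle (p \<circ> transpose a b) cs"
    using a by (intro perm_cycle_cong) (auto simp: transpose_def)
  then show ?thesis using that(1) False cyc by blast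
next
  case True
  then obtain i where i: "i < length cs" "cs ! i = b" by (meson in_set_conv_nth)
  let ?cs = "rotate (Suc i) cs"
  have "last ?cs = ?cs ! (length cs - 1)"
    using i by (metis last_conv_nth length_rotate list.size(3) not_less0)
  also have "\<dots> = cs ! ((Suc i + (length cs - 1)) mod length cs)"
    using i by (intro nth_rotate) simp
  also have "Suc i + (length cs - 1) = i + length cs" using i by simp
  finally have "last ?cs = b" using i by simp
  then have "perm_cycle p (?cs @ [a])"
    by (rule perm_cycle_snoc[OF perm_cycle_rotate[OF cyc]])
      (use a \<open>p b = a\<close> in \<open>auto simp: transpose_def\<close>)
  then show ?thesis using that(2) True i by simp
qed

lemma prod_fun_upd:
  assumes "finite A" "x \<in> A"
  shows "prod (g(x := y)) A = y * prod g (A - {x})"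
proof -
  have "prod (g(x := y)) (A - {x}) = prod g (A - {x})" by (intro prod.cong) auto
  then show ?thesis using assms by (simp add: prod.remove)
qed

text \<open>Composing \<open>p\<close> with the transposition of \<open>a\<close> and its preimage \<open>b\<close> removes \<open>a\<close>
  from its cycle; moving the weight of \<open>a\<close> onto \<open>b\<close> (with a sign) preserves the cycle condition.\<close>
lemma cycle_prod_transpose:
  fixes \<epsilon> :: "'a \<Rightarrow> real"
  assumes cycles: "\<And>cs. perm_cycle p cs \<Longrightarrow> set cs \<subseteq> A \<Longrightarrow> prod \<epsilon> (set cs) = - ((-1) ^ length cs)"
    and pb: "p b = a" and a: "a \<in> A"
    and cyc: "perm_cycle (p \<circ> transpose a b) cs" and sub: "set cs \<subseteq> A - {a}"
  shows "prod (\<epsilon>(b := - (\<epsilon> b * \<epsilon> a))) (set cs) = - ((-1) ^ length cs)"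
proof -
  have a_cs: "a \<notin> set cs" and cs_A: "set cs \<subseteq> A" using sub by auto
  from cyc pb a_cs show ?thesis
  proof (cases rule: perm_cycle_transpose_cases)
    case 1
    then have "prod (\<epsilon>(b := - (\<epsilon> b * \<epsilon> a))) (set cs) = prod \<epsilon> (set cs)" by (intro prod.cong) auto
    then show ?thesis using cycles[OF 1(2) cs_A] by simp
  next
    case (2 cs')
    then have "\<epsilon> a * prod \<epsilon> (set cs) = (-1) ^ length cs"
      using cycles[of cs'] cs_A a a_cs by simp
    moreover have "prod \<epsilon> (set cs) = \<epsilon> b * prod \<epsilon> (set cs - {b})"
      using 2(1) by (simp add: prod.remove)
    moreover have "prod (\<epsilon>(b := - (\<epsilon> b * \<epsilon> a))) (set cs) = - (\<epsilon> b * \<epsilon> a) * prod \<epsilon> (set cs - {b})"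
      using 2(1) by (intro prod_fun_upd) auto
    ultimately show ?thesis by (simp add: algebra_simps)
  qed
qed

lemma prod_eq_sign_if_cycle_prods:
  fixes \<epsilon> :: "'a \<Rightarrow> real"
  assumes "finite A" and "p permutes A" and "\<forall>x\<in>A. \<epsilon> x = 1 \<or> \<epsilon> x = -1"
    and "\<And>cs. perm_cycle p cs \<Longrightarrow> set cs \<subseteq> A \<Longrightarrow> prod \<epsilon> (set cs) = - ((-1) ^ length cs)"
  shows "prod \<epsilon> A = of_int (sign p)"
  using assms
proof (induct "card A" arbitrary: A p \<epsilon> rule: less_induct)
  case less
  note fin = less.prems(1) and perm = less.prems(2) and unit = less.prems(3)
    and cycles = less.prems(4)
  show ?case
  proof (cases "A = {}")
    case True
    then show ?thesis using perm by (simp add: permutes_empty sign_id)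
  next
    case False
    then obtain a where a: "a \<in> A" by auto
    have card_less: "card (A - {a}) < card A" using a fin by (meson card_Diff1_less)
    show ?thesis
    proof (cases "p a = a")
      case True
      have "\<epsilon> a = 1" using cycles[of "[a]"] True a unfolding perm_cycle_def by simp
      moreover have "p permutes A - {a}" using True by (intro permutes_superset[OF perm]) auto
      then have "prod \<epsilon> (A - {a}) = of_int (sign p)"
        by (rule less.hyps[OF card_less, rotated]) (use fin unit cycles in auto)
      ultimately show ?thesis using a fin by (simp add: prod.remove)
    next
      case False
      define b where "b = Hilbert_Choice.inv p a"
      have pb: "p b = a" and b: "b \<in> A"
        unfolding b_def using perm a by (auto simp: permutes_inverses(1) permutes_inv permutes_in_image)
      have ba: "b \<noteq> a" using pb False by auto
      define q where "q = p \<circ> transpose a b"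
      define \<epsilon>' where "\<epsilon>' = \<epsilon>(b := - (\<epsilon> b * \<epsilon> a))"
      have "q permutes A" unfolding q_def by (rule permutes_compose[OF permutes_swap_id[OF a b] perm])
      then have q_perm: "q permutes A - {a}"
        by (rule permutes_superset) (use pb in \<open>auto simp: q_def\<close>)
      have "permutation p" using fin perm permutation_permutes by blast
      then have sign_q: "sign q = - sign p"
        using ba by (simp add: q_def sign_compose permutation_swap_id sign_swap_id)
      have "\<epsilon> a = 1 \<or> \<epsilon> a = -1" "\<epsilon> b = 1 \<or> \<epsilon> b = -1" using unit a b by auto
      then have unit': "\<forall>x\<in>A - {a}. \<epsilon>' x = 1 \<or> \<epsilon>' x = -1" using unit by (auto simp: \<epsilon>'_def)
      have cycles': "prod \<epsilon>' (set cs) = - ((-1) ^ length cs)"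
        if "perm_cycle q cs" and "set cs \<subseteq> A - {a}" for cs
        using cycles pb a that unfolding \<epsilon>'_def q_def by (rule cycle_prod_transpose)
      have IH: "prod \<epsilon>' (A - {a}) = of_int (sign q)"
        using less.hyps[OF card_less _ q_perm unit' cycles'] fin by blast
      have "prod \<epsilon> (A - {a}) = \<epsilon> b * prod \<epsilon> (A - {a} - {b})"
        using fin b ba by (simp add: prod.remove)
      moreover have "prod \<epsilon>' (A - {a}) = - (\<epsilon> b * \<epsilon> a) * prod \<epsilon> (A - {a} - {b})"
        unfolding \<epsilon>'_def using fin b ba by (intro prod_fun_upd) auto
      ultimately have "prod \<epsilon>' (A - {a}) = - (\<epsilon> a * prod \<epsilon> (A - {a}))"
        by (simp add: algebra_simps)
      then show ?thesis using IH sign_q a fin by (simp add: prod.remove)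
    qed
  qed
qed

definition minor :: "nat \<Rightarrow> (nat \<Rightarrow> nat) \<Rightarrow> (nat \<Rightarrow> nat) \<Rightarrow> 'a mat \<Rightarrow> 'a mat" where
  "minor m g h M = mat m m (\<lambda>(i, j). M $$ (g i, h j))"

lemma det_minor_noninj:
  fixes M :: "'a::comm_ring_1 mat"
  assumes "\<not> inj_on h {0..<m}"
  shows "det (minor m g h M) = 0"
proof -
  from assms obtain i j where "i < m" "j < m" "i \<noteq> j" "h i = h j" unfolding inj_on_def by auto
  then show ?thesis unfolding minor_def by (intro det_identical_columns[of _ m i j]) (auto intro!: eq_vecI)
qed

text \<open>Column \<open>j\<close> of the minor of \<open>P * B\<close> is \<open>\<Sum>l. B $$ (l, h j)\<close> times column \<open>l\<close> of \<open>P\<close>, so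
  multilinearity in the columns expands the determinant over all choices \<open>f\<close> of \<open>l\<close>.\<close>
lemma det_minor_mult:
  fixes P B :: "'a::comm_ring_1 mat"
  assumes P: "P \<in> carrier_mat r p" and B: "B \<in> carrier_mat p q"
    and g: "\<forall>i<m. g i < r" and h: "\<forall>j<m. h j < q"
  shows "det (minor m g h (P * B)) =
    (\<Sum>f\<in>{f. (\<forall>i\<in>{0..<m}. f i \<in> {0..<p}) \<and> (\<forall>i. i \<notin> {0..<m} \<longrightarrow> f i = i)}.
       det (minor m g f P) * (\<Prod>j<m. B $$ (f j, h j)))"
proof -
  define v where "v = (\<lambda>l. vec m (\<lambda>i. P $$ (g i, l)))"
  define col where "col = (\<lambda>j. finsum_vec TYPE('a) m (\<lambda>l. B $$ (l, h j) \<cdot>\<^sub>v v l) {0..<p})"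
  have T: "transpose_mat (minor m g h (P * B)) = mat\<^sub>r m m col"
  proof (rule eq_matI)
    fix j i assume "j < dim_row (mat\<^sub>r m m col)" "i < dim_col (mat\<^sub>r m m col)"
    then have j: "j < m" and i: "i < m" by auto
    have "transpose_mat (minor m g h (P * B)) $$ (j, i) = (\<Sum>l<p. P $$ (g i, l) * B $$ (l, h j))"
      using P B g h i j by (auto simp: minor_def scalar_prod_def intro!: sum.cong)
    also have "\<dots> = col j $ i"
      unfolding col_def
      by (subst index_finsum_vec) (use i in \<open>auto simp: v_def lessThan_atLeast0 mult.commute intro!: sum.cong\<close>)
    finally show "transpose_mat (minor m g h (P * B)) $$ (j, i) = mat\<^sub>r m m col $$ (j, i)"
      using i j by simp
  qed (auto simp: minor_def)
  have "det (minor m g h (P * B)) = det (mat\<^sub>r m m col)"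
    by (metis T det_transpose mat_carrier minor_def)
  also have "\<dots> = (\<Sum>f\<in>{f. (\<forall>i\<in>{0..<m}. f i \<in> {0..<p}) \<and> (\<forall>i. i \<notin> {0..<m} \<longrightarrow> f i = i)}.
       det (mat\<^sub>r m m (\<lambda>j. B $$ (f j, h j) \<cdot>\<^sub>v v (f j))))"
    unfolding col_def by (rule det_linear_rows_sum) (auto simp: v_def)
  also have "\<dots> = (\<Sum>f\<in>{f. (\<forall>i\<in>{0..<m}. f i \<in> {0..<p}) \<and> (\<forall>i. i \<notin> {0..<m} \<longrightarrow> f i = i)}.
       det (minor m g f P) * (\<Prod>j<m. B $$ (f j, h j)))"
  proof (rule sum.cong[OF refl])
    fix f
    have "mat\<^sub>r m m (\<lambda>j. v (f j)) = transpose_mat (minor m g f P)"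
      by (rule eq_matI) (auto simp: v_def minor_def)
    then have "det (mat\<^sub>r m m (\<lambda>j. v (f j))) = det (minor m g f P)"
      by (metis det_transpose mat_carrier minor_def)
    moreover have "det (mat\<^sub>r m m (\<lambda>j. B $$ (f j, h j) \<cdot>\<^sub>v v (f j))) =
        prod (\<lambda>j. B $$ (f j, h j)) {0..<m} * det (mat\<^sub>r m m (\<lambda>j. v (f j)))"
      by (rule det_rows_mul) (auto simp: v_def)
    ultimately show "det (mat\<^sub>r m m (\<lambda>j. B $$ (f j, h j) \<cdot>\<^sub>v v (f j))) =
        det (minor m g f P) * (\<Prod>j<m. B $$ (f j, h j))"
      by (simp add: lessThan_atLeast0 mult.commute)
  qed
  finally show ?thesis .
qed

lemma chain_prod_carrier:
  assumes "\<forall>l<L. B l \<in> carrier_mat (d l) (d (Suc l))"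
  shows "chain_prod (d 0) B L \<in> carrier_mat (d 0) (d L)"
  using assms by (induct L) auto

text \<open>The terms of the iterated expansion of a minor of \<open>B 0 * \<dots> * B (L - 1)\<close>:
  \<open>F l j\<close> is the index in layer \<open>l\<close> of the \<open>j\<close>-th of \<open>m\<close> paths, which start at the rows
  \<open>g\<close> and end at the columns \<open>h \<circ> p\<close>; the paths are disjoint within each layer.\<close>
definition path_term ::
    "(nat \<Rightarrow> nat) \<Rightarrow> (nat \<Rightarrow> 'a::comm_ring_1 mat) \<Rightarrow> nat \<Rightarrow> nat \<Rightarrow> (nat \<Rightarrow> nat) \<Rightarrow> (nat \<Rightarrow> nat) \<Rightarrow> 'a \<Rightarrow> bool"
  where
  "path_term d B L m g h x \<longleftrightarrow> (\<exists>p F. p permutes {0..<m} \<and>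
     (\<forall>j<m. F 0 j = g j \<and> F L j = h (p j)) \<and>
     (\<forall>l\<le>L. inj_on (F l) {0..<m} \<and> (\<forall>j<m. F l j < d l)) \<and>
     x = signof p * (\<Prod>j<m. \<Prod>l<L. B l $$ (F l j, F (Suc l) j)))"

lemma sums_of_path_term_det_minor_one:
  fixes B :: "nat \<Rightarrow> 'a::comm_ring_1 mat"
  assumes g: "inj_on g {0..<m}" "\<forall>j<m. g j < d 0" and h: "\<forall>j<m. h j < d 0"
  shows "sums_of (path_term d B 0 m g h) (det (minor m g h (1\<^sub>m (d 0))))"
proof -
  let ?M = "minor m g h (1\<^sub>m (d 0)) :: 'a mat"
  have "sums_of (path_term d B 0 m g h) (signof p * (\<Prod>i = 0..<m. ?M $$ (i, p i)))"
    if p: "p permutes {0..<m}" for p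
  proof (cases "\<forall>i<m. g i = h (p i)")
    case True
    then have "(\<Prod>i = 0..<m. ?M $$ (i, p i)) = 1"
      using p g by (intro prod.neutral) (auto simp: minor_def permutes_in_image)
    moreover have "path_term d B 0 m g h (signof p)"
      unfolding path_term_def using p g True by (intro exI[of _ p] exI[of _ "\<lambda>_. g"]) auto
    ultimately show ?thesis by (metis mult.right_neutral sums_of.single)
  next
    case False
    then obtain i where "i < m" "g i \<noteq> h (p i)" by auto
    then have "(\<Prod>i = 0..<m. ?M $$ (i, p i)) = 0"
      using p g h by (intro prod_zero) (auto simp: minor_def permutes_in_image intro!: bexI[of _ i])
    then show ?thesis by (simp add: sums_of.zero)
  qed
  then show ?thesis by (subst det_def') (auto simp: minor_def intro: sums_of_sum)
qed

lemma path_term_extend: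
  assumes y: "path_term d B L m g f y"
    and h: "inj_on h {0..<m}" "\<forall>j<m. h j < d (Suc L)"
  shows "path_term d B (Suc L) m g h (y * (\<Prod>j<m. B L $$ (f j, h j)))"
proof -
  obtain p F where p: "p permutes {0..<m}" and ends: "\<forall>j<m. F 0 j = g j \<and> F L j = f (p j)"
    and layers: "\<forall>l\<le>L. inj_on (F l) {0..<m} \<and> (\<forall>j<m. F l j < d l)"
    and y_eq: "y = signof p * (\<Prod>j<m. \<Prod>l<L. B l $$ (F l j, F (Suc l) j))"
    using y unfolding path_term_def by blast
  define F' where "F' = F(Suc L := h \<circ> p)"
  have pm: "\<And>j. j < m \<Longrightarrow> p j < m" using p by (simp add: permutes_in_image)
  have "(\<Prod>j<m. B L $$ (f j, h j)) = (\<Prod>j\<in>{0..<m}. B L $$ (f (p j), h (p j)))"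
    using prod.permute[OF p, of "\<lambda>j. B L $$ (f j, h j)"] by (simp add: lessThan_atLeast0)
  also have "\<dots> = (\<Prod>j<m. B L $$ (F' L j, F' (Suc L) j))"
    unfolding F'_def using ends by (auto simp: lessThan_atLeast0 intro!: prod.cong)
  finally have new_layer: "(\<Prod>j<m. B L $$ (f j, h j)) = (\<Prod>j<m. B L $$ (F' L j, F' (Suc L) j))" .
  have old_layers: "(\<Prod>j<m. \<Prod>l<L. B l $$ (F l j, F (Suc l) j)) =
      (\<Prod>j<m. \<Prod>l<L. B l $$ (F' l j, F' (Suc l) j))"
    unfolding F'_def by (intro prod.cong refl) auto
  have "inj_on (h \<circ> p) {0..<m}"
    using h(1) p by (intro comp_inj_on) (auto simp: permutes_inj_on permutes_image)
  then have "\<forall>l\<le>Suc L. inj_on (F' l) {0..<m} \<and> (\<forall>j<m. F' l j < d l)"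
    using layers h(2) pm by (auto simp: F'_def le_Suc_eq)
  moreover have "\<forall>j<m. F' 0 j = g j \<and> F' (Suc L) j = h (p j)" using ends by (simp add: F'_def)
  moreover have "y * (\<Prod>j<m. B L $$ (f j, h j)) =
      signof p * (\<Prod>j<m. \<Prod>l<Suc L. B l $$ (F' l j, F' (Suc l) j))"
    unfolding y_eq new_layer old_layers by (simp add: prod.distrib mult.assoc)
  ultimately show ?thesis unfolding path_term_def using p by blast
qed

lemma sums_of_path_term_det_minor_chain_prod:
  assumes B: "\<forall>l<L. B l \<in> carrier_mat (d l) (d (Suc l))"
    and g: "inj_on g {0..<m}" "\<forall>j<m. g j < d 0" and h: "\<forall>j<m. h j < d L"
  shows "sums_of (path_term d B L m g h) (det (minor m g h (chain_prod (d 0) B L)))"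
  using B h
proof (induct L arbitrary: h)
  case 0
  then show ?case using g by (simp add: sums_of_path_term_det_minor_one)
next
  case (Suc L)
  show ?case
  proof (cases "inj_on h {0..<m}")
    case False
    then show ?thesis by (simp add: det_minor_noninj sums_of.zero del: chain_prod.simps)
  next
    case True
    have P: "chain_prod (d 0) B L \<in> carrier_mat (d 0) (d L)"
      using Suc.prems(1) by (intro chain_prod_carrier) auto
    have BL: "B L \<in> carrier_mat (d L) (d (Suc L))" using Suc.prems(1) by simp
    have "det (minor m g h (chain_prod (d 0) B (Suc L))) =
      (\<Sum>f\<in>{f. (\<forall>i\<in>{0..<m}. f i \<in> {0..<d L}) \<and> (\<forall>i. i \<notin> {0..<m} \<longrightarrow> f i = i)}.
         det (minor m g f (chain_prod (d 0) B L)) * (\<Prod>j<m. B L $$ (f j, h j)))"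
      unfolding chain_prod.simps using Suc.prems(2) g(2) by (intro det_minor_mult[OF P BL]) auto
    moreover have "sums_of (path_term d B (Suc L) m g h)
        (det (minor m g f (chain_prod (d 0) B L)) * (\<Prod>j<m. B L $$ (f j, h j)))"
      if "\<forall>i\<in>{0..<m}. f i \<in> {0..<d L}" for f
      using Suc.hyps[of f] Suc.prems(1) that
      by (intro sums_of_mult_right path_term_extend[OF _ True] Suc.prems(2)) auto
    ultimately show ?thesis by (auto intro: sums_of_sum)
  qed
qed

lemma sgn_prod: "sgn (prod f A) = (\<Prod>x\<in>A. sgn (f x :: 'a::linordered_idom))"
  by (induct A rule: infinite_finite_induct) (auto simp: sgn_mult)

lemma prod_sgn_eq_neg_one_power:
  fixes W :: "'b \<Rightarrow> 'a::linordered_idom"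
  assumes "finite A" and "\<forall>q\<in>A. W q \<noteq> 0"
  shows "(\<Prod>q\<in>A. sgn (W q)) = (-1) ^ card {q\<in>A. W q < 0}"
proof -
  have "(\<Prod>q\<in>A. sgn (W q)) = (\<Prod>q\<in>A. if W q < 0 then -1 else 1)"
    using assms(2) by (intro prod.cong) (auto simp: sgn_if)
  also have "\<dots> = (\<Prod>q\<in>{q\<in>A. W q < 0}. -1)"
    by (rule prod.inter_filter[OF assms(1), symmetric])
  finally show ?thesis by simp
qed

lemma prod_div_mod:
  fixes \<phi> :: "nat \<Rightarrow> nat \<Rightarrow> 'a::comm_monoid_mult"
  assumes "k > 0"
  shows "(\<Prod>q<k * c. \<phi> (q div k) (q mod k)) = (\<Prod>t<c. \<Prod>l<k. \<phi> t l)"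
proof -
  have "(\<Prod>q<k * c. \<phi> (q div k) (q mod k)) = (\<Prod>t<c. \<Prod>q\<in>{t * k..<t * k + k}. \<phi> (q div k) (q mod k))"
    using prod.nat_group[of "\<lambda>q. \<phi> (q div k) (q mod k)" k c] by (simp add: mult.commute)
  also have "\<dots> = (\<Prod>t<c. \<Prod>l<k. \<phi> t l)"
  proof (rule prod.cong[OF refl])
    fix t
    have "(\<Prod>q\<in>{t * k..<t * k + k}. \<phi> (q div k) (q mod k)) =
        (\<Prod>l\<in>{0..<k}. \<phi> ((l + t * k) div k) ((l + t * k) mod k))"
      using prod.shift_bounds_nat_ivl[of "\<lambda>q. \<phi> (q div k) (q mod k)" 0 "t * k" k]
      by (simp add: add.commute)
    then show "(\<Prod>q\<in>{t * k..<t * k + k}. \<phi> (q div k) (q mod k)) = (\<Prod>l<k. \<phi> t l)"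
      using assms by (simp add: lessThan_atLeast0)
  qed
  finally show ?thesis .
qed

text \<open>The closed walk in \<open>G\<close> obtained by following, layer by layer, the path of \<open>cs ! 0\<close>,
  then that of \<open>cs ! 1 = p (cs ! 0)\<close>, and so on; it closes up because each path ends
  where the path of its \<open>p\<close>-successor starts.\<close>
definition lift_cycle :: "nat \<Rightarrow> (nat \<Rightarrow> nat \<Rightarrow> nat) \<Rightarrow> nat list \<Rightarrow> (nat \<times> nat) list" where
  "lift_cycle k F cs = map (\<lambda>q. (q mod k, F (q mod k) (cs ! (q div k)))) [0..<k * length cs]"

lemma length_lift_cycle [simp]: "length (lift_cycle k F cs) = k * length cs"
  by (simp add: lift_cycle_def)

lemma lift_cycle_nth:
  "q < k * length cs \<Longrightarrow> lift_cycle k F cs ! q = (q mod k, F (q mod k) (cs ! (q div k)))"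
  by (simp add: lift_cycle_def)

lemma lift_cycle_nth_mod:
  assumes "k > 0" and "cs \<noteq> []"
  shows "lift_cycle k F cs ! (r mod (k * length cs)) =
    (r mod k, F (r mod k) (cs ! (r div k mod length cs)))"
proof -
  have "r mod (k * length cs) div k = r div k mod length cs"
    using assms by (simp add: mod_mult2_eq)
  moreover have "r mod (k * length cs) mod k = r mod k" by (simp add: mod_mult2_eq)
  ultimately show ?thesis using assms by (simp add: lift_cycle_def)
qed

lemma lift_cycle_nth_Suc:
  assumes k: "k > 0" and cyc: "perm_cycle p cs" and closes: "\<forall>x\<in>set cs. F k x = F 0 (p x)"
    and q: "q < k * length cs"
  shows "lift_cycle k F cs ! (Suc q mod (k * length cs)) =
    (Suc (q mod k) mod k, F (Suc (q mod k)) (cs ! (q div k)))"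
proof -
  let ?c = "length cs" and ?t = "q div k"
  have cs: "cs \<noteq> []" using cyc by (simp add: perm_cycle_def)
  have t: "?t < ?c" using q k by (simp add: div_less_iff_less_mult mult.commute)
  show ?thesis
  proof (cases "Suc (q mod k) = k")
    case False
    then show ?thesis using lift_cycle_nth_mod[OF k cs, where r = "Suc q"] t by (simp add: mod_Suc div_Suc)
  next
    case True
    have "p (cs ! ?t) = cs ! (Suc ?t mod ?c)" using cyc t by (simp add: perm_cycle_def)
    then have "F k (cs ! ?t) = F 0 (cs ! (Suc ?t mod ?c))" using closes t by (simp add: nth_mem)
    then show ?thesis using lift_cycle_nth_mod[OF k cs, where r = "Suc q"] True by (simp add: mod_Suc div_Suc)
  qed
qed

lemma distinct_lift_cycle:
  assumes k: "k > 0" and "distinct cs" and inj: "\<forall>l<k. inj_on (F l) (set cs)"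
  shows "distinct (lift_cycle k F cs)"
proof -
  have div_lt: "q div k < length cs" if "q < k * length cs" for q
    using that k by (simp add: div_less_iff_less_mult mult.commute)
  have "inj_on (\<lambda>q. (q mod k, F (q mod k) (cs ! (q div k)))) {0..<k * length cs}"
  proof (rule inj_onI)
    fix q1 q2 assume q: "q1 \<in> {0..<k * length cs}" "q2 \<in> {0..<k * length cs}"
      and eq: "(q1 mod k, F (q1 mod k) (cs ! (q1 div k))) = (q2 mod k, F (q2 mod k) (cs ! (q2 div k)))"
    have "cs ! (q1 div k) \<in> set cs" "cs ! (q2 div k) \<in> set cs" "q2 mod k < k"
      using q div_lt k by auto
    then have "cs ! (q1 div k) = cs ! (q2 div k)"
      using inj eq by (auto simp: inj_on_def)
    then have "q1 div k = q2 div k" using \<open>distinct cs\<close> q div_lt by (simp add: nth_eq_iff_index_eq)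
    then show "q1 = q2" using eq by (metis div_mult_mod_eq prod.inject)
  qed
  then show ?thesis by (simp add: lift_cycle_def distinct_map)
qed

lemma lift_cycle_is_dcycle:
  assumes k: "k > 0" and A: "\<forall>l<k. A l \<in> carrier_mat (n l) (n (Suc l mod k))"
    and cyc: "perm_cycle p cs" and closes: "\<forall>x\<in>set cs. F k x = F 0 (p x)"
    and bounds: "\<forall>l<k. \<forall>x\<in>set cs. F l x < n l" and inj: "\<forall>l<k. inj_on (F l) (set cs)"
    and nz: "\<forall>l<k. \<forall>x\<in>set cs. A l $$ (F l x, F (Suc l) x) \<noteq> 0"
  shows "is_dcycle k A (lift_cycle k F cs)"
proof -
  let ?G = "lift_cycle k F cs" and ?c = "length cs"
  have cs: "cs \<noteq> []" "distinct cs" using cyc by (auto simp: perm_cycle_def)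
  have div_lt: "q div k < ?c" if "q < k * ?c" for q
    using that k by (simp add: div_less_iff_less_mult mult.commute)
  have "distinct ?G" using k cs(2) inj by (rule distinct_lift_cycle)
  moreover have "is_edge k A (?G ! q) (?G ! (Suc q mod (k * ?c)))" if q: "q < k * ?c" for q
  proof -
    define l x where "l = q mod k" and "x = cs ! (q div k)"
    have l: "l < k" and x: "x \<in> set cs" using k div_lt[OF q] by (auto simp: l_def x_def)
    have "F (Suc l) x < n (Suc l mod k)"
    proof (cases "Suc l < k")
      case True
      then show ?thesis using bounds x by simp
    next
      case False
      then have "Suc l = k" using l by simp
      moreover have "p x \<in> set cs" using cyc x by (rule perm_cycle_closed)
      ultimately show ?thesis using closes bounds x k by simp
    qed
    moreover have "dim_row (A (Suc l mod k)) = n (Suc l mod k)"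
      using A k by (meson carrier_matD(1) mod_less_divisor)
    ultimately show ?thesis
      using lift_cycle_nth[OF q] lift_cycle_nth_Suc[OF k cyc closes q] A l x bounds nz
      unfolding is_edge_def is_vertex_def edge_weight_def l_def[symmetric] x_def[symmetric] by auto
  qed
  moreover have "?G \<noteq> []" using cs k by (simp flip: length_greater_0_conv)
  ultimately show ?thesis by (simp add: is_dcycle_def)
qed

lemma neg_one_power_neg_edges_lift_cycle:
  assumes k: "k > 0" and cyc: "perm_cycle p cs" and closes: "\<forall>x\<in>set cs. F k x = F 0 (p x)"
    and nz: "\<forall>l<k. \<forall>x\<in>set cs. A l $$ (F l x, F (Suc l) x) \<noteq> 0"
  shows "(-1) ^ neg_edges A (lift_cycle k F cs) =
    (\<Prod>x\<in>set cs. \<Prod>l<k. sgn (A l $$ (F l x, F (Suc l) x)))"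
proof -
  let ?c = "length cs"
  define W where "W q = A (q mod k) $$ (F (q mod k) (cs ! (q div k)), F (Suc (q mod k)) (cs ! (q div k)))" for q
  have div_lt: "q div k < ?c" if "q < k * ?c" for q
    using that k by (simp add: div_less_iff_less_mult mult.commute)
  have "neg_edges A (lift_cycle k F cs) = card {q\<in>{..<k * ?c}. W q < 0}"
    unfolding neg_edges_def
    by (rule arg_cong[where f = card])
      (auto simp: lift_cycle_nth lift_cycle_nth_Suc[OF k cyc closes] edge_weight_def W_def)
  also have "(-1) ^ \<dots> = (\<Prod>q<k * ?c. sgn (W q))"
    using nz k div_lt by (intro prod_sgn_eq_neg_one_power[symmetric]) (auto simp: W_def nth_mem)
  also have "\<dots> = (\<Prod>t<?c. \<Prod>l<k. sgn (A l $$ (F l (cs ! t), F (Suc l) (cs ! t))))"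
    unfolding W_def by (rule prod_div_mod[OF k])
  also have "\<dots> = (\<Prod>x\<in>set cs. \<Prod>l<k. sgn (A l $$ (F l x, F (Suc l) x)))"
    using cyc by (intro prod.reindex_bij_betw bij_betw_nth) (auto simp: perm_cycle_def)
  finally show ?thesis .
qed

lemma prod_sgn_lift_cycle_if_e_cycle_free:
  fixes cs :: "nat list"
  assumes ecf: "e_cycle_free k A"
    and k: "k > 0" and A: "\<forall>l<k. A l \<in> carrier_mat (n l) (n (Suc l mod k))"
    and cyc: "perm_cycle p cs" and closes: "\<forall>x\<in>set cs. F k x = F 0 (p x)"
    and bounds: "\<forall>l<k. \<forall>x\<in>set cs. F l x < n l" and inj: "\<forall>l<k. inj_on (F l) (set cs)"
    and nz: "\<forall>l<k. \<forall>x\<in>set cs. A l $$ (F l x, F (Suc l) x) \<noteq> 0"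
  shows "(\<Prod>x\<in>set cs. \<Prod>l<k. sgn (A l $$ (F l x, F (Suc l) x))) = - ((-1) ^ length cs)"
proof -
  let ?N = "neg_edges A (lift_cycle k F cs)"
  have "is_dcycle k A (lift_cycle k F cs)" by (rule lift_cycle_is_dcycle[OF k A cyc closes bounds inj nz])
  then have "(-1::int) ^ (length cs + ?N) \<noteq> 1"
    using ecf k unfolding e_cycle_free_def is_e_cycle_def by auto
  then have "odd (length cs + ?N)" by (metis neg_one_even_power)
  then have "(-1::real) ^ ?N = - ((-1) ^ length cs)"
    by (cases "even (length cs)") (auto simp: neg_one_even_power neg_one_odd_power)
  then show ?thesis using neg_one_power_neg_edges_lift_cycle[OF k cyc closes nz] by simp
qed

lemma sgn_sign_pattern_class:
  assumes "X \<in> \<Q> M" "i < dim_row M" "j < dim_col M"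
  shows "sgn (X $$ (i, j)) = sgn (M $$ (i, j))"
proof -
  have "(M $$ (i, j) > 0 \<longrightarrow> X $$ (i, j) > 0) \<and> (M $$ (i, j) < 0 \<longrightarrow> X $$ (i, j) < 0) \<and>
      (M $$ (i, j) = 0 \<longrightarrow> X $$ (i, j) = 0)"
    using assms unfolding sign_pattern_class_def by blast
  then show ?thesis by (cases "M $$ (i, j)" "0::real" rule: linorder_cases) (auto simp: sgn_if)
qed

lemma sign_pattern_class_carrier: "X \<in> \<Q> M \<Longrightarrow> M \<in> carrier_mat r c \<Longrightarrow> X \<in> carrier_mat r c"
  unfolding sign_pattern_class_def carrier_mat_def by auto

lemma sign_mult_prod_nonneg:
  fixes T :: "'b \<Rightarrow> real"
  assumes "(\<Prod>j\<in>J. sgn (T j)) = of_int (sign p)"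
  shows "0 \<le> of_int (sign p) * prod T J"
proof -
  have "prod T J = (\<Prod>j\<in>J. sgn (T j)) * (\<Prod>j\<in>J. \<bar>T j\<bar>)"
    by (simp add: sgn_mult_abs flip: prod.distrib)
  then have "of_int (sign p) * prod T J = (of_int (sign p))\<^sup>2 * (\<Prod>j\<in>J. \<bar>T j\<bar>)"
    using assms by (simp add: power2_eq_square)
  then show ?thesis by (simp add: prod_nonneg)
qed

lemma path_term_nonneg:
  assumes k: "k > 0" and A: "\<forall>l<k. A l \<in> carrier_mat (n l) (n (Suc l mod k))"
    and ecf: "e_cycle_free k A" and BQ: "\<forall>l<k. B l \<in> \<Q> (A l)"
    and x: "path_term (\<lambda>l. n (l mod k)) B k m s s x"
  shows "0 \<le> x"
proof -
  obtain p F where p: "p permutes {0..<m}" and ends: "\<forall>j<m. F 0 j = s j \<and> F k j = s (p j)"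
    and layers: "\<forall>l\<le>k. inj_on (F l) {0..<m} \<and> (\<forall>j<m. F l j < n (l mod k))"
    and x_eq: "x = signof p * (\<Prod>j<m. \<Prod>l<k. B l $$ (F l j, F (Suc l) j))"
    using x unfolding path_term_def by blast
  define T where "T j = (\<Prod>l<k. B l $$ (F l j, F (Suc l) j))" for j
  have x_T: "x = signof p * prod T {0..<m}" using x_eq by (simp add: T_def lessThan_atLeast0)
  show ?thesis
  proof (cases "\<exists>j<m. T j = 0")
    case True
    then have "prod T {0..<m} = 0" by (metis atLeastLessThan_iff finite_atLeastLessThan prod_zero zero_le)
    then show ?thesis using x_T by (metis mult_zero_right order_refl)
  next
    case False
    have bounds: "F l j < n l" and bounds_Suc: "F (Suc l) j < n (Suc l mod k)"
      if "l < k" "j < m" for l j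
      using layers that by (metis less_imp_le mod_less, metis Suc_leI)
    have sgn_eq: "sgn (B l $$ (F l j, F (Suc l) j)) = sgn (A l $$ (F l j, F (Suc l) j))"
      if "l < k" "j < m" for l j
      using BQ A bounds bounds_Suc that by (intro sgn_sign_pattern_class) auto
    have nz: "A l $$ (F l j, F (Suc l) j) \<noteq> 0" if "l < k" "j < m" for l j
    proof -
      have "B l $$ (F l j, F (Suc l) j) \<noteq> 0"
        using False that unfolding T_def by (metis finite_lessThan lessThan_iff prod_zero)
      then show ?thesis using sgn_eq[OF that] by (auto simp: sgn_if split: if_splits)
    qed
    have "(\<Prod>j\<in>{0..<m}. sgn (T j)) = of_int (sign p)"
    proof (rule prod_eq_sign_if_cycle_prods[OF _ p])
      show "\<forall>j\<in>{0..<m}. sgn (T j) = 1 \<or> sgn (T j) = -1" using False by (auto simp: sgn_if)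
    next
      fix cs assume cyc: "perm_cycle p cs" and sub: "set cs \<subseteq> {0..<m}"
      have "(\<Prod>j\<in>set cs. sgn (T j)) = (\<Prod>j\<in>set cs. \<Prod>l<k. sgn (A l $$ (F l j, F (Suc l) j)))"
        using sub sgn_eq by (intro prod.cong) (auto simp: T_def sgn_prod)
      also have "\<dots> = - ((-1) ^ length cs)"
        using sub ends layers p bounds nz
        by (intro prod_sgn_lift_cycle_if_e_cycle_free[OF ecf k A cyc])
          (auto simp: permutes_in_image intro: inj_on_subset[of _ "{0..<m}"])
      finally show "(\<Prod>j\<in>set cs. sgn (T j)) = - ((-1) ^ length cs)" .
    qed simp
    then show ?thesis using x_T sign_mult_prod_nonneg by metis
  qed
qed

lemma submatrix_eq_minor_pick:
  assumes "M \<in> carrier_mat r r"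
  shows "submatrix M S S = minor (card {i. i < r \<and> i \<in> S}) (pick S) (pick S) M"
  using assms by (intro eq_matI) (auto simp: minor_def dim_submatrix submatrix_index)

lemma inj_on_pick: "inj_on (pick S) {0..<card {i. i < r \<and> i \<in> S}}"
proof -
  have mono: "pick S i < pick S j" if "i < j" "j < card {i. i < r \<and> i \<in> S}" for i j
  proof (rule pick_mono[OF _ that(1)])
    have "finite S \<Longrightarrow> card {i. i < r \<and> i \<in> S} \<le> card S" by (intro card_mono) auto
    then show "j < card S \<or> infinite S" using that(2) by auto
  qed
  show ?thesis
  proof (rule inj_onI)
    fix i j assume "i \<in> {0..<card {i. i < r \<and> i \<in> S}}" "j \<in> {0..<card {i. i < r \<and> i \<in> S}}"
      and "pick S i = pick S j"
    then show "i = j" using mono[of i j] mono[of j i] by (cases i j rule: linorder_cases) auto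
  qed
qed

theorem corollary4:
  fixes k :: nat and n :: "nat \<Rightarrow> nat" and A :: "nat \<Rightarrow> real mat"
  assumes "k > 0"
    and "\<forall>j < k. n j > 0"
    and "\<forall>j < k. A j \<in> carrier_mat (n j) (n (Suc j mod k))"
    and "e_cycle_free k A"
  shows "\<forall>M \<in> sign_class_product k A. P0_matrix M"
proof
  note k = assms(1) and A = assms(3) and ecf = assms(4)
  fix M assume "M \<in> sign_class_product k A"
  then obtain B where M: "M = cyclic_product k B" and BQ: "\<forall>l<k. B l \<in> \<Q> (A l)"
    unfolding sign_class_product_def by blast
  define d where "d = (\<lambda>l. n (l mod k))"
  have B: "\<forall>l<k. B l \<in> carrier_mat (d l) (d (Suc l))"
    using BQ A by (auto simp: d_def intro: sign_pattern_class_carrier)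
  then have "dim_row (B 0) = d 0" using k by auto
  then have M_chain: "M = chain_prod (d 0) B k" using M by (simp add: cyclic_product_def)
  then have M_carrier: "M \<in> carrier_mat (n 0) (n 0)" using chain_prod_carrier[OF B] by (simp add: d_def)
  show "P0_matrix M" unfolding P0_matrix_def
  proof (intro conjI allI impI)
    show "M \<in> carrier_mat (dim_row M) (dim_row M)" using M_carrier by simp
    fix S
    let ?m = "card {i. i < n 0 \<and> i \<in> S}"
    have "sums_of (path_term d B k ?m (pick S) (pick S)) (det (submatrix M S S))"
      unfolding submatrix_eq_minor_pick[OF M_carrier] unfolding M_chain
      using B inj_on_pick pick_le by (intro sums_of_path_term_det_minor_chain_prod) (auto simp: d_def)
    then show "0 \<le> det (submatrix M S S)"
      by (rule sums_of_nonneg) (use path_term_nonneg[OF k A ecf BQ] in \<open>simp only: d_def\<close>)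
  qed
qed

end
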